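(* Let $\beta\in\mathbb{C}$ with $|\beta|=1$, let $m\in\mathrm{Hol}(\mathbb{D})$, $m\not\equiv0$, and let $T:\mathrm{Hol}(\mathbb{D})\to\mathrm{Hol}(\mathbb{D})$ be given by $(Tf)(z)=m(z)f(\beta z)$. Then $\sigma(T)=\beta\sigma(T)\cup\{m(0)\}$.
   Context: $\mathbb{D}$ is the open unit disc, $\mathrm{Hol}(\mathbb{D})$ the Fréchet space of holomorphic functions on $\mathbb{D}$. $\sigma(T)$ is the set of $\lambda\in\mathbb{C}$ such that $\lambda\mathrm{Id}-T$ is not bijective on $\mathrm{Hol}(\mathbb{D})$, and $\beta\sigma(T)=\{\beta\lambda:\lambda\in\sigma(T)\}$. *)

theory Defs
  imports "HOL-Complex_Analysis.Complex_Analysis"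
begin

text \<open>Hol(D), represented canonically: holomorphic functions on the unit disc,
  normalised to be 0 outside the disc (so that equality of elements is equality on D).\<close>
definition hol_disc :: "(complex \<Rightarrow> complex) set" where
  "hol_disc = {f. f holomorphic_on ball 0 1 \<and> (\<forall>z. z \<notin> ball 0 1 \<longrightarrow> f z = 0)}"

definition hol_spectrum :: "((complex \<Rightarrow> complex) \<Rightarrow> (complex \<Rightarrow> complex)) \<Rightarrow> complex set" where
  "hol_spectrum T = {l. \<not> bij_betw (\<lambda>f z. l * f z - T f z) hol_disc hol_disc}"

definition wcomp_op :: "(complex \<Rightarrow> complex) \<Rightarrow> complex \<Rightarrow> (complex \<Rightarrow> complex) \<Rightarrow> (complex \<Rightarrow> complex)" where
  "wcomp_op m \<beta> f = (\<lambda>z. if z \<in> ball 0 1 then m z * f (\<beta> * z) else 0)"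

end

theory Submission
  imports Defs
begin

text \<open>Write \<open>L(\<lambda>) = \<lambda> - T\<close>. Since \<open>L(\<lambda>) f (0) = (\<lambda> - m(0)) f(0)\<close>, the constant \<open>1\<close>
  is not in the range of \<open>L(m(0))\<close>, and for \<open>\<lambda> \<noteq> m(0)\<close> the operator \<open>L(\<lambda>)\<close> is bijective
  on \<open>Hol(D)\<close> iff it is bijective on the subspace of functions vanishing at \<open>0\<close>.
  Multiplication by \<open>z\<close> maps \<open>Hol(D)\<close> bijectively onto that subspace and intertwines:
  \<open>L(\<lambda>) (z f) = z \<beta> L(\<lambda>/\<beta>) f\<close>. Hence \<open>\<lambda> \<in> \<sigma>(T) \<longleftrightarrow> \<lambda>/\<beta> \<in> \<sigma>(T)\<close> for \<open>\<lambda> \<noteq> m(0)\<close>.\<close>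

definition shift_op :: "complex \<Rightarrow> ((complex \<Rightarrow> complex) \<Rightarrow> (complex \<Rightarrow> complex))
    \<Rightarrow> (complex \<Rightarrow> complex) \<Rightarrow> (complex \<Rightarrow> complex)" where
  "shift_op l T = (\<lambda>f z. l * f z - T f z)"

definition hol_disc_vanishing :: "(complex \<Rightarrow> complex) set" where
  "hol_disc_vanishing = {f \<in> hol_disc. f 0 = 0}"

definition mult_by_z :: "(complex \<Rightarrow> complex) \<Rightarrow> (complex \<Rightarrow> complex)" where
  "mult_by_z f = (\<lambda>z. z * f z)"

definition disc_const :: "complex \<Rightarrow> (complex \<Rightarrow> complex)" where
  "disc_const c = (\<lambda>z. if z \<in> ball 0 1 then c else 0)"

lemma mem_hol_spectrum_iff: "l \<in> hol_spectrum T \<longleftrightarrow> \<not> bij_betw (shift_op l T) hol_disc hol_disc"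
  by (simp add: hol_spectrum_def shift_op_def)

lemma hol_discI: "f holomorphic_on ball 0 1 \<Longrightarrow> (\<And>z. z \<notin> ball 0 1 \<Longrightarrow> f z = 0) \<Longrightarrow> f \<in> hol_disc"
  by (simp add: hol_disc_def)

lemma hol_disc_holomorphic: "f \<in> hol_disc \<Longrightarrow> f holomorphic_on ball 0 1"
  by (simp add: hol_disc_def)

lemma hol_disc_outside: "f \<in> hol_disc \<Longrightarrow> z \<notin> ball 0 1 \<Longrightarrow> f z = 0"
  by (simp add: hol_disc_def)

lemma hol_disc_add: "f \<in> hol_disc \<Longrightarrow> g \<in> hol_disc \<Longrightarrow> (\<lambda>z. f z + g z) \<in> hol_disc"
  unfolding hol_disc_def by (auto intro!: holomorphic_intros)

lemma hol_disc_diff: "f \<in> hol_disc \<Longrightarrow> g \<in> hol_disc \<Longrightarrow> (\<lambda>z. f z - g z) \<in> hol_disc"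
  unfolding hol_disc_def by (auto intro!: holomorphic_intros)

lemma hol_disc_cmult: "f \<in> hol_disc \<Longrightarrow> (\<lambda>z. c * f z) \<in> hol_disc"
  unfolding hol_disc_def by (auto intro!: holomorphic_intros)

lemma disc_const_in_hol_disc: "disc_const c \<in> hol_disc"
proof (rule hol_discI)
  show "disc_const c holomorphic_on ball 0 1"
    by (rule holomorphic_transform[of "\<lambda>z. c"]) (auto simp: disc_const_def)
qed (simp add: disc_const_def)

lemma bij_betw_cmult_hol_disc:
  assumes "c \<noteq> 0"
  shows "bij_betw (\<lambda>f z. c * f z) hol_disc hol_disc"
  by (rule bij_betw_byWitness[where f' = "\<lambda>f z. inverse c * f z"])
     (use assms in \<open>auto intro: hol_disc_cmult\<close>)

lemma bij_betw_mult_by_z: "bij_betw mult_by_z hol_disc hol_disc_vanishing"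
proof (rule bij_betw_byWitness[where f' = "\<lambda>g z. if z = 0 then deriv g 0 else g z / z"])
  show "\<forall>f\<in>hol_disc. (\<lambda>z. if z = 0 then deriv (mult_by_z f) 0 else mult_by_z f z / z) = f"
  proof
    fix f assume f: "f \<in> hol_disc"
    have "f field_differentiable at 0"
      using hol_disc_holomorphic[OF f] by (rule holomorphic_on_imp_differentiable_at) auto
    then show "(\<lambda>z. if z = 0 then deriv (mult_by_z f) 0 else mult_by_z f z / z) = f"
      by (auto simp: mult_by_z_def fun_eq_iff)
  qed
  show "(\<lambda>g z. if z = 0 then deriv g 0 else g z / z) ` hol_disc_vanishing \<subseteq> hol_disc"
  proof clarify
    fix g assume "g \<in> hol_disc_vanishing"
    then have g: "g \<in> hol_disc" "g 0 = 0" by (auto simp: hol_disc_vanishing_def)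
    have "(\<lambda>z. if z = 0 then deriv g 0 else (g z - g 0) / (z - 0)) holomorphic_on ball 0 1"
      by (rule pole_lemma_open) (auto intro: hol_disc_holomorphic[OF g(1)])
    then have "(\<lambda>z. if z = 0 then deriv g 0 else g z / z) holomorphic_on ball 0 1"
      by (rule holomorphic_transform) (simp add: g(2))
    with g show "(\<lambda>z. if z = 0 then deriv g 0 else g z / z) \<in> hol_disc"
      by (auto intro!: hol_discI simp: hol_disc_outside)
  qed
qed (auto simp: hol_disc_vanishing_def mult_by_z_def hol_disc_def intro!: holomorphic_intros)

lemma wcomp_op_in_hol_disc:
  assumes "norm \<beta> \<le> 1" "m holomorphic_on ball 0 1" "f \<in> hol_disc"
  shows "wcomp_op m \<beta> f \<in> hol_disc"
proof (rule hol_discI)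
  have "f \<circ> (\<lambda>z. \<beta> * z) holomorphic_on ball 0 1"
  proof (rule holomorphic_on_compose)
    show "f holomorphic_on (\<lambda>z. \<beta> * z) ` ball 0 1"
      using hol_disc_holomorphic[OF assms(3)]
    proof (rule holomorphic_on_subset)
      show "(\<lambda>z. \<beta> * z) ` ball 0 1 \<subseteq> ball 0 1"
        using assms(1) by (auto simp: norm_mult) (smt (verit) mult_left_le_one_le norm_ge_zero)
    qed
  qed (intro holomorphic_intros)
  then have "(\<lambda>z. m z * f (\<beta> * z)) holomorphic_on ball 0 1"
    using assms(2) by (auto intro!: holomorphic_intros simp: o_def)
  then show "wcomp_op m \<beta> f holomorphic_on ball 0 1"
    by (rule holomorphic_transform) (simp add: wcomp_op_def)
qed (simp add: wcomp_op_def)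

lemma shift_op_wcomp_op_in_hol_disc:
  "norm \<beta> \<le> 1 \<Longrightarrow> m holomorphic_on ball 0 1 \<Longrightarrow> f \<in> hol_disc
    \<Longrightarrow> shift_op l (wcomp_op m \<beta>) f \<in> hol_disc"
  unfolding shift_op_def by (intro hol_disc_diff hol_disc_cmult wcomp_op_in_hol_disc)

lemma shift_op_wcomp_op_at_0: "shift_op l (wcomp_op m \<beta>) f 0 = (l - m 0) * f 0"
  by (simp add: shift_op_def wcomp_op_def algebra_simps)

lemma shift_op_wcomp_op_add:
  "shift_op l (wcomp_op m \<beta>) (\<lambda>z. f z + g z)
    = (\<lambda>z. shift_op l (wcomp_op m \<beta>) f z + shift_op l (wcomp_op m \<beta>) g z)"
  by (simp add: shift_op_def wcomp_op_def fun_eq_iff algebra_simps)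

lemma shift_op_wcomp_op_diff:
  "shift_op l (wcomp_op m \<beta>) (\<lambda>z. f z - g z)
    = (\<lambda>z. shift_op l (wcomp_op m \<beta>) f z - shift_op l (wcomp_op m \<beta>) g z)"
  by (simp add: shift_op_def wcomp_op_def fun_eq_iff algebra_simps)

lemma shift_op_wcomp_op_mult_by_z:
  assumes "\<beta> \<noteq> 0"
  shows "shift_op l (wcomp_op m \<beta>) \<circ> mult_by_z
    = mult_by_z \<circ> ((\<lambda>f z. \<beta> * f z) \<circ> shift_op (l / \<beta>) (wcomp_op m \<beta>))"
  using assms by (simp add: shift_op_def wcomp_op_def mult_by_z_def fun_eq_iff algebra_simps)

lemma bij_betw_shift_op_wcomp_op_iff_vanishing:
  assumes "norm \<beta> \<le> 1" "m holomorphic_on ball 0 1" "l \<noteq> m 0"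
  shows "bij_betw (shift_op l (wcomp_op m \<beta>)) hol_disc hol_disc
    \<longleftrightarrow> bij_betw (shift_op l (wcomp_op m \<beta>)) hol_disc_vanishing hol_disc_vanishing"
    (is "bij_betw ?L _ _ \<longleftrightarrow> _")
proof
  have maps: "?L f \<in> hol_disc" if "f \<in> hol_disc" for f
    using assms(1,2) that by (rule shift_op_wcomp_op_in_hol_disc)
  have vanishing_iff: "?L f \<in> hol_disc_vanishing \<longleftrightarrow> f \<in> hol_disc_vanishing" if "f \<in> hol_disc" for f
    using assms(3) that maps by (simp add: hol_disc_vanishing_def shift_op_wcomp_op_at_0)
  have sub: "hol_disc_vanishing \<subseteq> hol_disc"
    by (auto simp: hol_disc_vanishing_def)
  show "bij_betw ?L hol_disc_vanishing hol_disc_vanishing" if bij: "bij_betw ?L hol_disc hol_disc"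
  proof (rule bij_betw_subset[OF bij sub])
    show "?L ` hol_disc_vanishing = hol_disc_vanishing"
    proof (intro equalityI subsetI)
      fix g assume g: "g \<in> hol_disc_vanishing"
      then have "g \<in> ?L ` hol_disc"
        using sub bij_betw_imp_surj_on[OF bij] by auto
      then obtain f where f: "f \<in> hol_disc" "g = ?L f"
        by blast
      with g vanishing_iff have "f \<in> hol_disc_vanishing"
        by simp
      with f(2) show "g \<in> ?L ` hol_disc_vanishing"
        by (rule image_eqI)
    qed (use sub vanishing_iff in auto)
  qed
  show "bij_betw ?L hol_disc hol_disc" if bij0: "bij_betw ?L hol_disc_vanishing hol_disc_vanishing"
  proof (rule bij_betw_imageI)
    have zero: "(\<lambda>z. 0) \<in> hol_disc_vanishing" "?L (\<lambda>z. 0) = (\<lambda>z. 0)"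
      by (auto simp: hol_disc_vanishing_def hol_disc_def shift_op_def wcomp_op_def fun_eq_iff)
    show "inj_on ?L hol_disc"
    proof (rule inj_onI)
      fix f g assume f: "f \<in> hol_disc" and g: "g \<in> hol_disc" and eq: "?L f = ?L g"
      have diff: "?L (\<lambda>z. f z - g z) = (\<lambda>z. 0)"
        using eq by (simp add: shift_op_wcomp_op_diff)
      then have fg: "(\<lambda>z. f z - g z) \<in> hol_disc_vanishing"
        using vanishing_iff[OF hol_disc_diff[OF f g]] zero(1) by simp
      have "(\<lambda>z. f z - g z) = (\<lambda>z. 0)"
        by (rule inj_onD[OF bij_betw_imp_inj_on[OF bij0] _ fg zero(1)]) (simp add: diff zero(2))
      then show "f = g"
        by (simp add: fun_eq_iff)
    qed
    show "?L ` hol_disc = hol_disc"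
    proof (intro equalityI subsetI)
      fix g assume g: "g \<in> hol_disc"
      define c where "c = g 0 / (l - m 0)"
      have "(\<lambda>z. g z - ?L (disc_const c) z) \<in> hol_disc_vanishing"
        using assms(3) g maps[OF disc_const_in_hol_disc]
        by (simp add: hol_disc_vanishing_def hol_disc_diff shift_op_wcomp_op_at_0 disc_const_def c_def)
      then have "(\<lambda>z. g z - ?L (disc_const c) z) \<in> ?L ` hol_disc_vanishing"
        using bij_betw_imp_surj_on[OF bij0] by simp
      then obtain h where h: "(\<lambda>z. g z - ?L (disc_const c) z) = ?L h" "h \<in> hol_disc_vanishing"
        by (rule imageE)
      then have "g = ?L (\<lambda>z. disc_const c z + h z)"
        by (simp add: shift_op_wcomp_op_add flip: h(1))
      moreover have "(\<lambda>z. disc_const c z + h z) \<in> hol_disc"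
        using h(2) sub by (auto intro: hol_disc_add disc_const_in_hol_disc)
      ultimately show "g \<in> ?L ` hol_disc"
        by (rule image_eqI)
    qed (auto intro: maps)
  qed
qed

lemma bij_betw_shift_op_wcomp_op_iff:
  assumes "\<beta> \<noteq> 0" "norm \<beta> \<le> 1" "m holomorphic_on ball 0 1" "l \<noteq> m 0"
  shows "bij_betw (shift_op l (wcomp_op m \<beta>)) hol_disc hol_disc
    \<longleftrightarrow> bij_betw (shift_op (l / \<beta>) (wcomp_op m \<beta>)) hol_disc hol_disc"
proof -
  have maps: "shift_op (l / \<beta>) (wcomp_op m \<beta>) ` hol_disc \<subseteq> hol_disc"
    using assms(2,3) shift_op_wcomp_op_in_hol_disc by blast
  have "bij_betw (shift_op l (wcomp_op m \<beta>)) hol_disc hol_disc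
      \<longleftrightarrow> bij_betw (shift_op l (wcomp_op m \<beta>)) hol_disc_vanishing hol_disc_vanishing"
    using assms(2-4) by (rule bij_betw_shift_op_wcomp_op_iff_vanishing)
  also have "\<dots> \<longleftrightarrow> bij_betw (shift_op l (wcomp_op m \<beta>) \<circ> mult_by_z) hol_disc hol_disc_vanishing"
    by (rule bij_betw_comp_iff[OF bij_betw_mult_by_z])
  also have "\<dots> \<longleftrightarrow> bij_betw ((\<lambda>f z. \<beta> * f z) \<circ> shift_op (l / \<beta>) (wcomp_op m \<beta>)) hol_disc hol_disc"
    unfolding shift_op_wcomp_op_mult_by_z[OF assms(1)]
    by (rule bij_betw_comp_iff2[OF bij_betw_mult_by_z, symmetric])
       (use maps in \<open>auto simp: image_subset_iff intro!: hol_disc_cmult\<close>)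
  also have "\<dots> \<longleftrightarrow> bij_betw (shift_op (l / \<beta>) (wcomp_op m \<beta>)) hol_disc hol_disc"
    by (rule bij_betw_comp_iff2[OF bij_betw_cmult_hol_disc[OF assms(1)] maps, symmetric])
  finally show ?thesis .
qed

lemma m0_in_hol_spectrum_wcomp_op: "m 0 \<in> hol_spectrum (wcomp_op m \<beta>)"
proof (rule ccontr)
  assume "m 0 \<notin> hol_spectrum (wcomp_op m \<beta>)"
  then have "disc_const 1 \<in> shift_op (m 0) (wcomp_op m \<beta>) ` hol_disc"
    using disc_const_in_hol_disc by (simp add: mem_hol_spectrum_iff bij_betw_imp_surj_on)
  then obtain f where "shift_op (m 0) (wcomp_op m \<beta>) f = disc_const 1"
    by (auto simp: image_iff)
  then have "shift_op (m 0) (wcomp_op m \<beta>) f 0 = 1"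
    by (simp add: disc_const_def)
  then show False
    by (simp add: shift_op_wcomp_op_at_0)
qed

lemma mem_hol_spectrum_wcomp_op_iff:
  "\<beta> \<noteq> 0 \<Longrightarrow> norm \<beta> \<le> 1 \<Longrightarrow> m holomorphic_on ball 0 1 \<Longrightarrow> l \<noteq> m 0
    \<Longrightarrow> l \<in> hol_spectrum (wcomp_op m \<beta>) \<longleftrightarrow> l / \<beta> \<in> hol_spectrum (wcomp_op m \<beta>)"
  by (simp add: mem_hol_spectrum_iff bij_betw_shift_op_wcomp_op_iff)

theorem theorem2p1:
  fixes \<beta> :: complex and m :: "complex \<Rightarrow> complex"
  assumes "norm \<beta> = 1"
    and "m holomorphic_on ball 0 1"
    and "\<exists>z\<in>ball 0 1. m z \<noteq> 0"
  shows "hol_spectrum (wcomp_op m \<beta>) = (\<lambda>l. \<beta> * l) ` hol_spectrum (wcomp_op m \<beta>) \<union> {m 0}"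
proof -
  have \<beta>: "\<beta> \<noteq> 0" "norm \<beta> \<le> 1"
    using assms(1) by auto
  have scaled_iff: "l \<in> (\<lambda>l. \<beta> * l) ` S \<longleftrightarrow> l / \<beta> \<in> S" for l and S :: "complex set"
    using \<beta>(1) by (auto intro: image_eqI[where x = "l / \<beta>"])
  show ?thesis
  proof (intro set_eqI)
    fix l
    show "l \<in> hol_spectrum (wcomp_op m \<beta>)
      \<longleftrightarrow> l \<in> (\<lambda>l. \<beta> * l) ` hol_spectrum (wcomp_op m \<beta>) \<union> {m 0}"
      using mem_hol_spectrum_wcomp_op_iff[OF \<beta> assms(2)] m0_in_hol_spectrum_wcomp_op
      by (cases "l = m 0") (auto simp: scaled_iff)
  qed
qed

end
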